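(* For every integer $t\ge 2$, $$\lim_{n\to\infty}\frac{l\bigl(2^{t-1}n+2^{t-2}\bigr)}{l\bigl(2^{t-1}n+2^{t-2}-1\bigr)}=\frac{3F(t-1)}{F(t-1)-2}.$$
   Context: For $n\ge 0$, $c(n)=\sum_{i=0}^{n}\left(\binom{n}{i}\bmod 2\right)2^{i}$, the integer whose binary digits form the $n$-th row of Pascal's triangle modulo $2$; one has $c(2n)\equiv 1\pmod 4$, and $l(n)=\frac{c(2n)-1}{4}$. $F(j)=2^{2^j}+1$ is the $j$-th Fermat number. *)

theory Defs
  imports Complex_Main
begin

definition c :: "nat \<Rightarrow> nat" where
  "c n = (\<Sum>i=0..n. ((n choose i) mod 2) * 2 ^ i)"

text \<open>Since c(2n) is congruent to 1 mod 4, the nat division below is exact.\<close>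
definition l :: "nat \<Rightarrow> nat" where
  "l n = (c (2 * n) - 1) div 4"

definition F :: "nat \<Rightarrow> nat" where
  "F j = 2 ^ (2 ^ j) + 1"

end

theory Submission
  imports Defs
begin

text \<open>
  Read row n of Pascal's triangle modulo 2 as the digits of a number in base b, call it R(b, n).
  Lucas' congruences for binomial coefficients give R(b, 2n) = R(b^2, n) and
  R(b, 2n+1) = (1 + b) R(b^2, n); moreover c(2m) = R(4, m). Stripping the k = t - 2 factors 2
  from the arguments 2^(t-1) n + 2^(t-2) and 2^(t-1) n + 2^(t-2) - 1 leaves the common factor
  Q(n) = R(B^2, n) with B = 4^(2^k), multiplied by 1 + B = F(t-1) and by
  prod_{j<k} (1 + 4^(2^j)) = (B - 1)/3 = (F(t-1) - 2)/3 respectively. Since Q(n) tends to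
  infinity, the rounding in l is negligible and the ratio tends to the ratio of these factors.
\<close>

definition pascal_mod2_eval :: "nat \<Rightarrow> nat \<Rightarrow> nat" where
  "pascal_mod2_eval b n = (\<Sum>i\<le>n. ((n choose i) mod 2) * b ^ i)"

lemma even_choose_double:
  "(even (2 * n choose (2 * i)) \<longleftrightarrow> even (n choose i)) \<and> even (2 * n choose Suc (2 * i))"
proof (induction n arbitrary: i)
  case 0
  then show ?case by (cases i) auto
next
  case (Suc n)
  show ?case
  proof (cases i)
    case 0
    then show ?thesis by simp
  next
    case (Suc j)
    have "2 * Suc n choose (2 * i)
        = (2 * n choose (2 * j)) + 2 * (2 * n choose Suc (2 * j)) + (2 * n choose (2 * Suc j))"
      "2 * Suc n choose Suc (2 * i)
        = (2 * n choose Suc (2 * j)) + 2 * (2 * n choose (2 * Suc j)) + (2 * n choose Suc (2 * Suc j))"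
      using Suc by (simp_all add: numeral_2_eq_2)
    then show ?thesis
      using Suc.IH[of j] Suc.IH[of "Suc j"] Suc by auto
  qed
qed

lemma even_choose_Suc_double:
  "(even (Suc (2 * n) choose (2 * i)) \<longleftrightarrow> even (n choose i))
   \<and> (even (Suc (2 * n) choose Suc (2 * i)) \<longleftrightarrow> even (n choose i))"
proof (cases i)
  case 0
  then show ?thesis using even_choose_double[of n 0] by simp
next
  case (Suc j)
  have "Suc (2 * n) choose (2 * i) = (2 * n choose Suc (2 * j)) + (2 * n choose (2 * Suc j))"
    using Suc by (simp add: numeral_2_eq_2)
  then show ?thesis using even_choose_double[of n j] even_choose_double[of n i] Suc by auto
qed

lemma pascal_mod2_eval_eq_sum_atMost:
  assumes "n \<le> N"
  shows "pascal_mod2_eval b n = (\<Sum>i\<le>N. ((n choose i) mod 2) * b ^ i)"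
  unfolding pascal_mod2_eval_def
  by (rule sum.mono_neutral_left) (use assms in \<open>auto simp: binomial_eq_0\<close>)

lemma pascal_mod2_eval_double: "pascal_mod2_eval b (2 * n) = pascal_mod2_eval (b\<^sup>2) n"
proof -
  have "pascal_mod2_eval b (2 * n) = (\<Sum>i\<le>Suc (2 * n). ((2 * n choose i) mod 2) * b ^ i)"
    by (rule pascal_mod2_eval_eq_sum_atMost) simp
  also have "\<dots> = (\<Sum>i\<le>n. ((n choose i) mod 2) * b ^ (2 * i))"
    unfolding sum.in_pairs_0 using even_choose_double[of n] by (simp add: mod_2_eq_odd)
  finally show ?thesis by (simp add: pascal_mod2_eval_def power_mult)
qed

lemma pascal_mod2_eval_Suc_double:
  "pascal_mod2_eval b (Suc (2 * n)) = (1 + b) * pascal_mod2_eval (b\<^sup>2) n"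
proof -
  have "pascal_mod2_eval b (Suc (2 * n)) = (\<Sum>i\<le>Suc (2 * n). ((Suc (2 * n) choose i) mod 2) * b ^ i)"
    by (simp add: pascal_mod2_eval_def)
  also have "\<dots> = (\<Sum>i\<le>n. (1 + b) * (((n choose i) mod 2) * b ^ (2 * i)))"
    unfolding sum.in_pairs_0 using even_choose_Suc_double[of n] by (simp add: mod_2_eq_odd algebra_simps)
  finally show ?thesis by (simp add: pascal_mod2_eval_def sum_distrib_left power_mult)
qed

lemma pascal_mod2_eval_pow2_mult:
  "pascal_mod2_eval b (2 ^ k * x) = pascal_mod2_eval (b ^ 2 ^ k) x"
proof (induction k arbitrary: b)
  case (Suc k)
  have "pascal_mod2_eval b (2 ^ Suc k * x) = pascal_mod2_eval (b\<^sup>2) (2 ^ k * x)"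
    by (simp add: mult.assoc pascal_mod2_eval_double)
  also have "\<dots> = pascal_mod2_eval ((b\<^sup>2) ^ 2 ^ k) x"
    by (rule Suc.IH)
  finally show ?case by (simp add: power_mult)
qed simp

lemma pascal_mod2_eval_pow2_mult_pred:
  "pascal_mod2_eval b (2 ^ k * x + 2 ^ k - 1)
   = (\<Prod>j<k. 1 + b ^ 2 ^ j) * pascal_mod2_eval (b ^ 2 ^ k) x"
proof (induction k arbitrary: b)
  case (Suc k)
  obtain p where "(2 :: nat) ^ k = Suc p"
    using not0_implies_Suc by fastforce
  then have "2 ^ Suc k * x + 2 ^ Suc k - 1 = Suc (2 * (2 ^ k * x + 2 ^ k - 1))"
    by simp
  then have "pascal_mod2_eval b (2 ^ Suc k * x + 2 ^ Suc k - 1)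
      = (1 + b) * pascal_mod2_eval (b\<^sup>2) (2 ^ k * x + 2 ^ k - 1)"
    by (simp only: pascal_mod2_eval_Suc_double)
  also have "\<dots> = (1 + b) * ((\<Prod>j<k. 1 + (b\<^sup>2) ^ 2 ^ j) * pascal_mod2_eval ((b\<^sup>2) ^ 2 ^ k) x)"
    by (simp only: Suc.IH)
  also have "\<dots> = (\<Prod>j<Suc k. 1 + b ^ 2 ^ j) * pascal_mod2_eval (b ^ 2 ^ Suc k) x"
    by (simp only: prod.lessThan_Suc_shift power_mult[symmetric] power_Suc mult.assoc) simp
  finally show ?case .
qed simp

lemma power_le_pascal_mod2_eval: "b ^ n \<le> pascal_mod2_eval b n"
  unfolding pascal_mod2_eval_def
  by (rule order_trans[OF _ member_le_sum[of n]]) auto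

lemma filterlim_pascal_mod2_eval:
  assumes "2 \<le> b"
  shows "filterlim (pascal_mod2_eval b) at_top sequentially"
proof (rule filterlim_at_top_mono[OF filterlim_ident], intro always_eventually allI)
  fix n :: nat
  have "n \<le> 2 ^ n" by (simp add: less_imp_le)
  also have "\<dots> \<le> b ^ n" using assms by (rule power_mono) simp
  finally show "n \<le> pascal_mod2_eval b n"
    using power_le_pascal_mod2_eval order_trans by blast
qed

lemma l_eq_pascal_mod2_eval: "l m = (pascal_mod2_eval 4 m - 1) div 4"
proof -
  have "c (2 * m) = pascal_mod2_eval 2 (2 * m)"
    by (simp add: c_def pascal_mod2_eval_def atLeast0AtMost)
  then show ?thesis by (simp add: l_def pascal_mod2_eval_double)
qed

lemma diff_one_mult_prod_one_plus_power_pow2: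
  "(b - 1) * (\<Prod>j<k. 1 + b ^ 2 ^ j) = b ^ 2 ^ k - (1 :: 'a :: comm_ring_1)"
proof (induction k)
  case (Suc k)
  have "(b ^ 2 ^ k - 1) * (1 + b ^ 2 ^ k) = b ^ 2 ^ Suc k - 1"
    by (simp add: algebra_simps power_mult[symmetric] power2_eq_square[symmetric] mult.commute)
  then show ?case by (simp flip: Suc.IH add: mult.assoc)
qed simp

lemma tendsto_pred_div4_ratio:
  fixes Q :: "nat \<Rightarrow> nat"
  assumes "filterlim Q at_top sequentially"
  shows "(\<lambda>n. real ((K * Q n - 1) div 4) / real (Q n)) \<longlonglongrightarrow> real K / 4"
proof (rule tendsto_sandwich)
  have Q_real: "filterlim (\<lambda>n. real (Q n)) at_top sequentially"
    by (rule filterlim_compose[OF filterlim_real_sequentially assms])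
  have bounds: "real K / 4 - inverse (real q) \<le> real ((K * q - 1) div 4) / real q
      \<and> real ((K * q - 1) div 4) / real q \<le> real K / 4" if "0 < q" for q
  proof -
    define r where "r = real ((K * q - 1) div 4)"
    have "real (K * q) - 4 \<le> 4 * r" "4 * r \<le> real (K * q)"
      unfolding r_def by linarith+
    then have "(real (K * q) - 4) / (4 * real q) \<le> 4 * r / (4 * real q)"
      "4 * r / (4 * real q) \<le> real (K * q) / (4 * real q)"
      by (intro divide_right_mono; simp)+
    moreover have "(real (K * q) - 4) / (4 * real q) = real K / 4 - inverse (real q)"
      using that by (simp add: field_simps)
    ultimately show ?thesis using that by (simp add: r_def)
  qed
  have pos: "\<forall>\<^sub>F n in sequentially. 0 < Q n"
    using assms[unfolded filterlim_iff] eventually_gt_at_top[of 0] by blast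
  show "\<forall>\<^sub>F n in sequentially. real K / 4 - inverse (real (Q n)) \<le> real ((K * Q n - 1) div 4) / real (Q n)"
    "\<forall>\<^sub>F n in sequentially. real ((K * Q n - 1) div 4) / real (Q n) \<le> real K / 4"
    using pos by (auto elim!: eventually_mono dest: bounds)
  show "(\<lambda>n. real K / 4 - inverse (real (Q n))) \<longlonglongrightarrow> real K / 4"
    using tendsto_diff[OF tendsto_const tendsto_inverse_0_at_top[OF Q_real]] by simp
qed simp

lemma tendsto_pred_div4_quotient:
  fixes Q :: "nat \<Rightarrow> nat"
  assumes "filterlim Q at_top sequentially" and "0 < P"
  shows "(\<lambda>n. real ((A * Q n - 1) div 4) / real ((P * Q n - 1) div 4)) \<longlonglongrightarrow> real A / real P"
proof -
  have "(\<lambda>n. (real ((A * Q n - 1) div 4) / real (Q n)) / (real ((P * Q n - 1) div 4) / real (Q n)))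
      \<longlonglongrightarrow> (real A / 4) / (real P / 4)"
    using assms by (intro tendsto_divide tendsto_pred_div4_ratio) auto
  then have "(\<lambda>n. (real ((A * Q n - 1) div 4) / real (Q n)) / (real ((P * Q n - 1) div 4) / real (Q n)))
      \<longlonglongrightarrow> real A / real P"
    by simp
  moreover have "\<forall>\<^sub>F n in sequentially. 0 < Q n"
    using assms(1)[unfolded filterlim_iff] eventually_gt_at_top[of 0] by blast
  then have "\<forall>\<^sub>F n in sequentially.
      (real ((A * Q n - 1) div 4) / real (Q n)) / (real ((P * Q n - 1) div 4) / real (Q n))
      = real ((A * Q n - 1) div 4) / real ((P * Q n - 1) div 4)"
    by (rule eventually_mono) simp
  ultimately show ?thesis by (rule Lim_transform_eventually)
qed

theorem mainTheorem9:
  fixes t :: nat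
  assumes "t \<ge> 2"
  shows "(\<lambda>n. real (l (2 ^ (t - 1) * n + 2 ^ (t - 2))) /
                real (l (2 ^ (t - 1) * n + 2 ^ (t - 2) - 1)))
         \<longlonglongrightarrow> 3 * real (F (t - 1)) / (real (F (t - 1)) - 2)"
proof -
  define k where "k = t - 2"
  define B :: nat where "B = 4 ^ 2 ^ k"
  define P :: nat where "P = (\<Prod>j<k. 1 + 4 ^ 2 ^ j)"
  define Q where "Q = pascal_mod2_eval (B\<^sup>2)"
  have t: "t - 1 = Suc k" "t - 2 = k" using assms by (auto simp: k_def)
  have "2 ^ (t - 1) * n + 2 ^ (t - 2) = 2 ^ k * Suc (2 * n)"
    "2 ^ (t - 1) * n + 2 ^ (t - 2) - 1 = 2 ^ k * (2 * n) + 2 ^ k - 1" for n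
    unfolding t by simp_all
  then have l_eqs: "l (2 ^ (t - 1) * n + 2 ^ (t - 2)) = ((1 + B) * Q n - 1) div 4"
    "l (2 ^ (t - 1) * n + 2 ^ (t - 2) - 1) = (P * Q n - 1) div 4" for n
    by (simp_all only: l_eq_pascal_mod2_eval pascal_mod2_eval_pow2_mult pascal_mod2_eval_Suc_double
        pascal_mod2_eval_pow2_mult_pred pascal_mod2_eval_double B_def P_def Q_def)
  have "(4 :: nat) ^ 1 \<le> B\<^sup>2"
    unfolding B_def power_mult[symmetric] by (rule power_increasing) simp_all
  then have Q_lim: "filterlim Q at_top sequentially"
    unfolding Q_def by (intro filterlim_pascal_mod2_eval) simp
  have F_eq: "real (F (t - 1)) = real (1 + B)"
    unfolding t F_def B_def by (simp add: power_mult)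
  have "3 * real P = real B - 1"
    using diff_one_mult_prod_one_plus_power_pow2[of "4 :: real" k] by (simp add: B_def P_def)
  then have "real (F (t - 1)) - 2 = 3 * real P"
    using F_eq by simp
  then have limit_value: "3 * real (F (t - 1)) / (real (F (t - 1)) - 2) = real (F (t - 1)) / real P"
    by simp
  have P_pos: "0 < P" by (simp add: P_def)
  show ?thesis
    unfolding l_eqs limit_value unfolding F_eq by (rule tendsto_pred_div4_quotient[OF Q_lim P_pos])
qed

end
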